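(* Let $\mathcal{V}$ be a finite set of Boolean variables, and let $\phi^{inv}_1=\mathbf{G}\,B_1(\mathcal{V}\cup\mathbf{X}\mathcal{V})$ and $\phi^{inv}_2=\mathbf{G}\,B_2(\mathcal{V}\cup\mathbf{X}\mathcal{V})$ be two invariants with non-empty languages such that $\phi^{inv}_1\rightarrow\phi^{inv}_2$ is valid, $\phi^{inv}_2\rightarrow\phi^{inv}_1$ is not valid, and $L(\phi^{inv}_2)$ is strongly connected. Then $\dim(L(\phi^{inv}_1))<\dim(L(\phi^{inv}_2))$.
   Context: Formulae are interpreted over $\omega$-words $w=w_1w_2\dots$ over $\Sigma=2^{\mathcal{V}}$; $L(\phi)$ is the set of $\omega$-words satisfying $\phi$; a formula is valid if every $\omega$-word satisfies it. $B(\mathcal{V}\cup\mathbf{X}\mathcal{V})$ denotes a pure Boolean expression over the atoms $p$ and $\mathbf{X}p$ for $p\in\mathcal{V}$; $w\models p$ iff $p\in w_1$, $w\models\mathbf{X}p$ iff $p\in w_2$, and $w\models\mathbf{G}\psi$ iff every suffix $w^j=w_jw_{j+1}\dots$ satisfies $\psi$. For $L\subseteq\Sigma^\omega$, $A(L)$ is the set of finite prefixes of words of $L$, and for $u\in A(L)$, $S_u(L)=\{v\in\Sigma^\omega: uv\in L\}$. $L$ is strongly connected if for every $u\in A(L)$ there is a finite word $v\in\Sigma^*$ with $S_{uv}(L)=L$. Let $r=|\Sigma|$. The $\alpha$-dimensional Hausdorff outer measure is $m_\alpha(L)=\lim_{n\to\infty}\inf_{V\in\mathcal{L}_n}\sum_{v\in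 V}r^{-\alpha|v|}$, where $\mathcal{L}_n$ is the collection of sets $V\subseteq\Sigma^*$ of words of length at least $n$ such that every word of $L$ has a prefix in $V$; the Hausdorff dimension $\dim(L)$ is the unique $\bar\alpha$ with $m_\alpha(L)=\infty$ for $\alpha<\bar\alpha$ and $m_\alpha(L)=0$ for $\alpha>\bar\alpha$. *)

theory Defs
  imports "HOL-Analysis.Analysis" "HOL-Library.Omega_Words_Fun"
begin

text \<open>The finite set of Boolean variables V is the finite type 'v (V = UNIV);
  the alphabet Sigma = 2^V is the type 'v set; omega-words are 'v set word
  (= nat => 'v set), finite words are 'v set list. Positions are 0-based.\<close>

text \<open>Pure Boolean expressions over atoms p and X p, p in V.\<close>
datatype 'v bexp =
    BTrue
  | BFalse
  | Atom 'v
  | NextAtom 'v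
  | BNot "'v bexp"
  | BAnd "'v bexp" "'v bexp"
  | BOr "'v bexp" "'v bexp"

fun beval :: "'v bexp \<Rightarrow> 'v set word \<Rightarrow> bool" where
  "beval BTrue w = True"
| "beval BFalse w = False"
| "beval (Atom p) w = (p \<in> w 0)"
| "beval (NextAtom p) w = (p \<in> w 1)"
| "beval (BNot b) w = (\<not> beval b w)"
| "beval (BAnd b c) w = (beval b w \<and> beval c w)"
| "beval (BOr b c) w = (beval b w \<or> beval c w)"

definition sat_inv :: "'v set word \<Rightarrow> 'v bexp \<Rightarrow> bool" where
  "sat_inv w B \<longleftrightarrow> (\<forall>j. beval B (suffix j w))"

definition inv_lang :: "'v bexp \<Rightarrow> 'v set word set" where
  "inv_lang B = {w. sat_inv w B}"

definition prefixes_of :: "'a word set \<Rightarrow> 'a list set" where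
  "prefixes_of L = {u. \<exists>w\<in>L. \<exists>n. u = subsequence w 0 n}"

definition state_of :: "'a list \<Rightarrow> 'a word set \<Rightarrow> 'a word set" where
  "state_of u L = {v. u \<frown> v \<in> L}"

definition strongly_connected :: "'a word set \<Rightarrow> bool" where
  "strongly_connected L \<longleftrightarrow>
     (\<forall>u\<in>prefixes_of L. \<exists>v. state_of (u @ v) L = L)"

definition covers :: "nat \<Rightarrow> 'a word set \<Rightarrow> 'a list set set" where
  "covers n L = {V. (\<forall>v\<in>V. n \<le> length v) \<and>
                    (\<forall>w\<in>L. \<exists>k. subsequence w 0 k \<in> V)}"

definition cover_sum :: "real \<Rightarrow> 'v::finite set list set \<Rightarrow> ennreal" where
  "cover_sum \<alpha> V = (SUP F\<in>{F. finite F \<and> F \<subseteq> V}.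
      \<Sum>v\<in>F. ennreal (real (card (UNIV :: 'v set set)) powr (- \<alpha> * real (length v))))"

text \<open>alpha-dimensional Hausdorff outer measure: lim_{n\<rightarrow>\<infinity>} inf_{V\<in>L_n} sum.
  The sequence is nondecreasing in n, the limit (lim) exists in ennreal.\<close>
definition hausdorff_measure :: "real \<Rightarrow> 'v::finite set word set \<Rightarrow> ennreal" where
  "hausdorff_measure \<alpha> L = lim (\<lambda>n. INF V\<in>covers n L. cover_sum \<alpha> V)"

definition hausdorff_dim :: "'v::finite set word set \<Rightarrow> real" where
  "hausdorff_dim L = (THE a. (\<forall>\<alpha>. \<alpha> < a \<longrightarrow> hausdorff_measure \<alpha> L = \<infinity>) \<and>
                               (\<forall>\<alpha>. \<alpha> > a \<longrightarrow> hausdorff_measure \<alpha> L = 0))"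

end

theory Submission
  imports Defs
begin

text \<open>
  An invariant \<open>G B\<close> is a local condition: a word satisfies it iff every pair of consecutive
  letters does. The dimension of such a language \<open>L\<close> is governed by the number \<open>p(n)\<close> of its
  prefixes of length \<open>n\<close>: covering \<open>L\<close> by these prefixes shows that \<open>p(n) \<le> M \<gamma>\<^sup>n\<close> forces
  \<open>dim L \<le> log\<^sub>r \<gamma>\<close>, and a mass distribution argument (with Koenig's lemma reducing covers to
  finite ones) shows that \<open>\<beta>\<^sup>n \<le> p(n) \<le> C \<beta>\<^sup>n\<close> forces \<open>dim L \<ge> log\<^sub>r \<beta>\<close>.

  In the strongly connected language \<open>L\<^sub>2\<close> every prefix extends by at most \<open>D\<close> letters to a
  reset word, after which any word of \<open>L\<^sub>2\<close> may follow. Hence \<open>p\<^sub>2\<close> is supermultiplicative up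
  to constants, and together with submultiplicativity \<open>\<beta>\<^sup>n \<le> p\<^sub>2(n) \<le> C \<beta>\<^sup>n\<close> for some \<open>\<beta>\<close>. As
  \<open>L\<^sub>1 \<subset> L\<^sub>2\<close>, some reset word \<open>h\<close> of \<open>L\<^sub>2\<close> contains a step forbidden in \<open>L\<^sub>1\<close>. Inserting \<open>h\<close>
  between a prefix of \<open>L\<^sub>1\<close> of length \<open>i\<close> and a prefix of \<open>L\<^sub>2\<close> of length \<open>n - i\<close> is essentially
  injective, so \<open>\<Sum>\<^sub>i p\<^sub>1(i) p\<^sub>2(n - i) = O(\<beta>\<^sup>n)\<close>. This is impossible if \<open>p\<^sub>1(m) \<ge> \<beta>\<^sup>m\<close> for all \<open>m\<close>,
  since then the sum is at least \<open>(n + 1) \<beta>\<^sup>n\<close>. So \<open>p\<^sub>1(m) < \<beta>\<^sup>m\<close> for some \<open>m\<close>, and by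
  submultiplicativity \<open>p\<^sub>1(n) = O(\<gamma>\<^sup>n)\<close> with \<open>\<gamma> < \<beta>\<close>.
\<close>

section \<open>Invariant languages\<close>

lemma prefixes_ofI:
  assumes "u \<frown> x \<in> L" shows "u \<in> prefixes_of L"
proof -
  have "u = prefix (length u) (u \<frown> x)" by simp
  then show ?thesis using assms unfolding prefixes_of_def by blast
qed

lemma prefix_in_prefixes_of: "w \<in> L \<Longrightarrow> prefix n w \<in> prefixes_of L"
  unfolding prefixes_of_def by blast

lemma prefixes_ofE:
  assumes "u \<in> prefixes_of L"
  obtains x where "u \<frown> x \<in> L"
proof -
  from assms obtain w n where "w \<in> L" "u = prefix n w" unfolding prefixes_of_def by blast
  then have "u \<frown> suffix n w \<in> L" by (simp flip: prefix_suffix)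
  then show thesis by (rule that)
qed

lemma prefixes_of_take:
  assumes "u \<in> prefixes_of L" shows "take k u \<in> prefixes_of L"
proof -
  obtain w n where "w \<in> L" "u = prefix n w" using assms unfolding prefixes_of_def by blast
  then have "take k u = prefix (min k n) w" by simp
  then show ?thesis using \<open>w \<in> L\<close> unfolding prefixes_of_def by blast
qed

definition inv_step :: "'v bexp \<Rightarrow> 'v set \<Rightarrow> 'v set \<Rightarrow> bool" where
  "inv_step B a b = beval B (\<lambda>k. if k = 0 then a else b)"

lemma beval_eq_inv_step: "beval B w = inv_step B (w 0) (w 1)"
  unfolding inv_step_def by (induction B) auto

lemma in_inv_lang_iff: "w \<in> inv_lang B \<longleftrightarrow> (\<forall>j. inv_step B (w j) (w (Suc j)))"
  unfolding inv_lang_def sat_inv_def by (simp add: beval_eq_inv_step)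

lemma inv_lang_suffix: "x \<in> inv_lang B \<Longrightarrow> suffix k x \<in> inv_lang B"
  unfolding in_inv_lang_iff by simp

lemma inv_step_nth_prefix:
  assumes "u \<in> prefixes_of (inv_lang B)" "Suc j < length u"
  shows "inv_step B (u ! j) (u ! Suc j)"
proof -
  obtain x where "u \<frown> x \<in> inv_lang B" using assms(1) by (rule prefixes_ofE)
  then have "inv_step B ((u \<frown> x) j) ((u \<frown> x) (Suc j))" unfolding in_inv_lang_iff by blast
  then show ?thesis using assms(2) by simp
qed

lemma prefixes_of_inv_lang_drop:
  assumes "u \<in> prefixes_of (inv_lang B)"
  shows "drop k u \<in> prefixes_of (inv_lang B)"
proof -
  obtain x where x: "u \<frown> x \<in> inv_lang B" using assms by (rule prefixes_ofE)
  have "drop k u \<frown> x = suffix (min k (length u)) (u \<frown> x)"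
    by (cases "k \<le> length u") (simp_all add: min_def)
  also have "\<dots> \<in> inv_lang B" using x by (rule inv_lang_suffix)
  finally have "drop k u \<frown> x \<in> inv_lang B" .
  then show ?thesis by (rule prefixes_ofI)
qed

lemma in_inv_lang_if_prefixes:
  assumes "\<And>n. prefix n x \<in> prefixes_of (inv_lang B)"
  shows "x \<in> inv_lang B"
  unfolding in_inv_lang_iff
proof
  fix j
  have "inv_step B (prefix (Suc (Suc j)) x ! j) (prefix (Suc (Suc j)) x ! Suc j)"
    by (rule inv_step_nth_prefix[OF assms]) simp
  then show "inv_step B (x j) (x (Suc j))" by (simp add: nth_append)
qed

lemma conc_in_inv_lang_iff:
  assumes "u \<in> prefixes_of (inv_lang B)" "u \<noteq> []" "x \<in> inv_lang B"
  shows "u \<frown> x \<in> inv_lang B \<longleftrightarrow> inv_step B (last u) (x 0)"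
proof
  assume "u \<frown> x \<in> inv_lang B"
  then have "inv_step B ((u \<frown> x) (length u - 1)) ((u \<frown> x) (Suc (length u - 1)))"
    unfolding in_inv_lang_iff by blast
  then show "inv_step B (last u) (x 0)" using assms(2) by (simp add: last_conv_nth)
next
  assume last: "inv_step B (last u) (x 0)"
  show "u \<frown> x \<in> inv_lang B" unfolding in_inv_lang_iff
  proof
    fix j
    consider "Suc j < length u" | "Suc j = length u" | "length u \<le> j" by linarith
    then show "inv_step B ((u \<frown> x) j) ((u \<frown> x) (Suc j))"
    proof cases
      case 1
      then show ?thesis using inv_step_nth_prefix[OF assms(1)] by simp
    next
      case 2
      then have "j = length u - 1" by simp
      then show ?thesis using last \<open>Suc j = length u\<close> by (simp add: last_conv_nth[OF assms(2)])
    next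
      case 3
      then show ?thesis using assms(3) unfolding in_inv_lang_iff by (simp add: Suc_diff_le)
    qed
  qed
qed

section \<open>Prefix counts\<close>

definition prefixes_of_length :: "nat \<Rightarrow> 'a word set \<Rightarrow> 'a list set" where
  "prefixes_of_length n L = {u \<in> prefixes_of L. length u = n}"

definition prefix_count :: "'a word set \<Rightarrow> nat \<Rightarrow> nat" where
  "prefix_count L n = card (prefixes_of_length n L)"

lemma finite_prefixes_of_length: "finite (prefixes_of_length n (L :: 'a::finite word set))"
  by (rule finite_subset[OF _ finite_lists_length_eq[of "UNIV :: 'a set" n]])
    (auto simp: prefixes_of_length_def)

lemma prefixes_of_length_in_covers: "prefixes_of_length n L \<in> covers n L"
  unfolding covers_def prefixes_of_length_def by (auto intro: prefix_in_prefixes_of)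

lemma prefix_count_zero_le: "prefix_count L 0 \<le> 1"
proof -
  have "prefixes_of_length 0 L \<subseteq> {[]}" unfolding prefixes_of_length_def by auto
  then show ?thesis unfolding prefix_count_def
    using card_mono[of "{[]}" "prefixes_of_length 0 L"] by simp
qed

lemma prefix_count_pos:
  fixes L :: "'a::finite word set"
  assumes "L \<noteq> {}" shows "1 \<le> prefix_count L n"
proof -
  obtain w where "w \<in> L" using assms by blast
  then have "prefix n w \<in> prefixes_of_length n L"
    unfolding prefixes_of_length_def by (simp add: prefix_in_prefixes_of)
  then have "prefixes_of_length n L \<noteq> {}" by blast
  then show ?thesis unfolding prefix_count_def
    by (simp add: Suc_le_eq card_gt_0_iff finite_prefixes_of_length)
qed

lemma prefixes_of_length_take:
  assumes "L \<noteq> {}" "m \<le> n"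
  shows "prefixes_of_length m L = take m ` prefixes_of_length n L"
proof
  show "prefixes_of_length m L \<subseteq> take m ` prefixes_of_length n L"
  proof
    fix u assume "u \<in> prefixes_of_length m L"
    then obtain w k where w: "w \<in> L" "u = prefix k w" "length u = m"
      unfolding prefixes_of_length_def prefixes_of_def by blast
    then have "u = take m (prefix n w)" using assms(2) by (simp add: min_def)
    moreover have "prefix n w \<in> prefixes_of_length n L"
      unfolding prefixes_of_length_def using w(1) by (simp add: prefix_in_prefixes_of)
    ultimately show "u \<in> take m ` prefixes_of_length n L" by blast
  qed
next
  show "take m ` prefixes_of_length n L \<subseteq> prefixes_of_length m L"
    unfolding prefixes_of_length_def using assms(2) prefixes_of_take by auto
qed

lemma prefix_count_mono:
  fixes L :: "'a::finite word set"
  assumes "L \<noteq> {}" shows "mono (prefix_count L)"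
proof
  fix m n :: nat assume mn: "m \<le> n"
  show "prefix_count L m \<le> prefix_count L n"
    unfolding prefix_count_def prefixes_of_length_take[OF assms mn]
    by (rule card_image_le[OF finite_prefixes_of_length])
qed

lemma prefix_count_inv_lang_submult:
  fixes B :: "'v::finite bexp"
  shows "prefix_count (inv_lang B) (a + b) \<le> prefix_count (inv_lang B) a * prefix_count (inv_lang B) b"
proof -
  let ?P = "\<lambda>n. prefixes_of_length n (inv_lang B)"
  have "inj_on (\<lambda>u. (take a u, drop a u)) (?P (a + b))"
  proof (rule inj_onI)
    fix u v assume "(take a u, drop a u) = (take a v, drop a v)"
    then have "take a u @ drop a u = take a v @ drop a v" by simp
    then show "u = v" by simp
  qed
  moreover have "(\<lambda>u. (take a u, drop a u)) ` ?P (a + b) \<subseteq> ?P a \<times> ?P b"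
    unfolding prefixes_of_length_def using prefixes_of_take prefixes_of_inv_lang_drop by auto
  ultimately have "card (?P (a + b)) \<le> card (?P a \<times> ?P b)"
    by (intro card_inj_on_le finite_cartesian_product finite_prefixes_of_length)
  then show ?thesis unfolding prefix_count_def by (simp add: card_cartesian_product)
qed

lemma card_prefixes_with_prefix_le:
  fixes B :: "'v::finite bexp"
  assumes "length v \<le> n"
  shows "card {u \<in> prefixes_of_length n (inv_lang B). take (length v) u = v}
    \<le> prefix_count (inv_lang B) (n - length v)"
  unfolding prefix_count_def
proof (rule card_inj_on_le)
  let ?E = "{u \<in> prefixes_of_length n (inv_lang B). take (length v) u = v}"
  show "inj_on (drop (length v)) ?E"
  proof (rule inj_onI)
    fix x y assume "x \<in> ?E" "y \<in> ?E" "drop (length v) x = drop (length v) y"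
    then have "take (length v) x @ drop (length v) x = take (length v) y @ drop (length v) y"
      by simp
    then show "x = y" by simp
  qed
  show "drop (length v) ` ?E \<subseteq> prefixes_of_length (n - length v) (inv_lang B)"
    unfolding prefixes_of_length_def using prefixes_of_inv_lang_drop by auto
qed (rule finite_prefixes_of_length)

section \<open>Hausdorff dimension from prefix counts\<close>

lemma card_alphabet_ge_2: "2 \<le> real CARD('v::finite set)"
proof -
  have "(2::real) ^ 1 \<le> 2 ^ CARD('v)" by (rule power_increasing) (simp_all add: Suc_leI)
  then show ?thesis by (simp add: card_UNIV_set)
qed

definition cover_weight :: "real \<Rightarrow> 'v::finite set list \<Rightarrow> real" where
  "cover_weight \<alpha> v = real CARD('v set) powr (- \<alpha> * real (length v))"

lemma cover_weight_pos: "0 < cover_weight \<alpha> (v :: 'v::finite set list)"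
  using card_alphabet_ge_2[where 'v = 'v] unfolding cover_weight_def by simp

lemma cover_sum_eq_SUP:
  "cover_sum \<alpha> V = (SUP F\<in>{F. finite F \<and> F \<subseteq> V}. ennreal (\<Sum>v\<in>F. cover_weight \<alpha> v))"
  unfolding cover_sum_def cover_weight_def[symmetric]
  by (rule SUP_cong) (auto intro!: sum_ennreal less_imp_le[OF cover_weight_pos])

lemma cover_sum_ge:
  "finite F \<Longrightarrow> F \<subseteq> V \<Longrightarrow> ennreal (\<Sum>v\<in>F. cover_weight \<alpha> v) \<le> cover_sum \<alpha> V"
  unfolding cover_sum_eq_SUP by (rule SUP_upper) auto

lemma cover_sum_leI:
  assumes "\<And>F. finite F \<Longrightarrow> F \<subseteq> V \<Longrightarrow> ennreal (\<Sum>v\<in>F. cover_weight \<alpha> v) \<le> M"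
  shows "cover_sum \<alpha> V \<le> M"
  unfolding cover_sum_eq_SUP by (rule SUP_least) (use assms in auto)

definition cover_inf :: "real \<Rightarrow> 'v::finite set word set \<Rightarrow> nat \<Rightarrow> ennreal" where
  "cover_inf \<alpha> L n = (INF V\<in>covers n L. cover_sum \<alpha> V)"

lemma cover_inf_mono: "m \<le> n \<Longrightarrow> cover_inf \<alpha> L m \<le> cover_inf \<alpha> L n"
  unfolding cover_inf_def covers_def by (rule INF_superset_mono) auto

lemma hausdorff_measure_eq_SUP: "hausdorff_measure \<alpha> L = (SUP n. cover_inf \<alpha> L n)"
proof -
  have "incseq (cover_inf \<alpha> L)" by (simp add: incseq_def cover_inf_mono)
  then have "cover_inf \<alpha> L \<longlonglongrightarrow> (SUP n. cover_inf \<alpha> L n)" by (rule LIMSEQ_SUP)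
  then show ?thesis unfolding hausdorff_measure_def cover_inf_def[symmetric] by (rule limI)
qed

lemma cover_inf_le_hausdorff_measure: "cover_inf \<alpha> L n \<le> hausdorff_measure \<alpha> L"
  unfolding hausdorff_measure_eq_SUP by (rule SUP_upper) simp

lemma cover_weight_le_power:
  fixes v :: "'v::finite set list"
  assumes "n \<le> length v" "\<alpha> \<le> \<beta>"
  shows "cover_weight \<beta> v \<le> (real CARD('v set) powr (\<alpha> - \<beta>)) ^ n * cover_weight \<alpha> v"
proof -
  let ?r = "real CARD('v set)"
  have r: "2 \<le> ?r" by (rule card_alphabet_ge_2)
  have "(?r powr (\<alpha> - \<beta>)) ^ length v = ?r powr ((\<alpha> - \<beta>) * length v)"
    using r by (simp add: powr_realpow[symmetric] powr_powr mult.assoc)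
  moreover have "cover_weight \<beta> v = ?r powr ((\<alpha> - \<beta>) * length v + - \<alpha> * length v)"
    unfolding cover_weight_def by (simp add: algebra_simps)
  ultimately have "cover_weight \<beta> v = (?r powr (\<alpha> - \<beta>)) ^ length v * cover_weight \<alpha> v"
    unfolding powr_add cover_weight_def by simp
  also have "\<dots> \<le> (?r powr (\<alpha> - \<beta>)) ^ n * cover_weight \<alpha> v"
    using assms r powr_mono[of "\<alpha> - \<beta>" 0 ?r]
    by (intro mult_right_mono power_decreasing less_imp_le[OF cover_weight_pos]) auto
  finally show ?thesis .
qed

lemma cover_sum_le_power:
  fixes V :: "'v::finite set list set"
  assumes "V \<in> covers n L" "\<alpha> \<le> \<beta>"
  shows "cover_sum \<beta> V \<le> ennreal ((real CARD('v set) powr (\<alpha> - \<beta>)) ^ n) * cover_sum \<alpha> V"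
proof (rule cover_sum_leI)
  let ?c = "(real CARD('v set) powr (\<alpha> - \<beta>)) ^ n"
  fix F assume F: "finite F" "F \<subseteq> V"
  have "(\<Sum>v\<in>F. cover_weight \<beta> v) \<le> (\<Sum>v\<in>F. ?c * cover_weight \<alpha> v)"
    using F assms unfolding covers_def by (intro sum_mono cover_weight_le_power) auto
  then have "ennreal (\<Sum>v\<in>F. cover_weight \<beta> v) \<le> ennreal (?c * (\<Sum>v\<in>F. cover_weight \<alpha> v))"
    by (intro ennreal_leI) (simp add: sum_distrib_left)
  also have "\<dots> = ennreal ?c * ennreal (\<Sum>v\<in>F. cover_weight \<alpha> v)"
    by (intro ennreal_mult sum_nonneg less_imp_le[OF cover_weight_pos]) simp
  also have "\<dots> \<le> ennreal ?c * cover_sum \<alpha> V"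
    by (rule mult_left_mono[OF cover_sum_ge[OF F]]) simp
  finally show "ennreal (\<Sum>v\<in>F. cover_weight \<beta> v) \<le> ennreal ?c * cover_sum \<alpha> V" .
qed

lemma hausdorff_measure_zero_above:
  fixes L :: "'v::finite set word set"
  assumes "hausdorff_measure \<alpha> L \<noteq> \<infinity>" and "\<alpha> < \<beta>"
  shows "hausdorff_measure \<beta> L = 0"
proof -
  obtain h where h: "0 \<le> h" "hausdorff_measure \<alpha> L = ennreal h"
    using assms(1) by (cases "hausdorff_measure \<alpha> L") auto
  define q where "q = real CARD('v set) powr (\<alpha> - \<beta>)"
  have q: "0 \<le> q" "q < 1"
    unfolding q_def using card_alphabet_ge_2[where 'v = 'v] assms(2) by (auto intro: powr_less_one)
  have "cover_inf \<beta> L n0 = 0" for n0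
  proof -
    have bound: "cover_inf \<beta> L n0 \<le> ennreal (q ^ n * (h + 1))" if "n0 \<le> n" for n
    proof -
      have "cover_inf \<alpha> L n < ennreal (h + 1)"
        using cover_inf_le_hausdorff_measure[of \<alpha> L n] h by (simp add: le_less_trans)
      then obtain V where V: "V \<in> covers n L" "cover_sum \<alpha> V < ennreal (h + 1)"
        unfolding cover_inf_def INF_less_iff by blast
      have "cover_inf \<beta> L n0 \<le> cover_sum \<beta> V"
        using cover_inf_mono[OF that] INF_lower[OF V(1)] unfolding cover_inf_def by (rule order_trans)
      also have "\<dots> \<le> ennreal (q ^ n) * cover_sum \<alpha> V"
        unfolding q_def using cover_sum_le_power[OF V(1)] assms(2) by simp
      also have "\<dots> \<le> ennreal (q ^ n) * ennreal (h + 1)"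
        using V(2) by (intro mult_left_mono) auto
      finally show ?thesis using q h by (simp add: ennreal_mult)
    qed
    have "(\<lambda>n. ennreal (q ^ n * (h + 1))) \<longlonglongrightarrow> ennreal (0 * (h + 1))"
      using q by (intro tendsto_ennrealI tendsto_mult tendsto_const LIMSEQ_power_zero) simp
    then have "cover_inf \<beta> L n0 \<le> ennreal 0"
      using bound by (intro LIMSEQ_le_const) auto
    then show ?thesis by simp
  qed
  then show ?thesis unfolding hausdorff_measure_eq_SUP by simp
qed

lemma hausdorff_measure_minus_one:
  fixes L :: "'v::finite set word set"
  assumes "L \<noteq> {}"
  shows "hausdorff_measure (-1) L = \<infinity>"
proof -
  obtain w where w: "w \<in> L" using assms by blast
  have "of_nat n \<le> cover_inf (-1) L n" for n
    unfolding cover_inf_def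
  proof (rule INF_greatest)
    fix V assume V: "V \<in> covers n L"
    then obtain k where "prefix k w \<in> V" using w unfolding covers_def by blast
    moreover have "n \<le> length (prefix k w)" using V \<open>prefix k w \<in> V\<close> unfolding covers_def by blast
    ultimately have k: "prefix k w \<in> V" "n \<le> k" by simp_all
    have "n < 2 ^ k" using k(2) less_exp[of k] by linarith
    then have "real n < 2 ^ k" using of_nat_less_iff[of n "2 ^ k", where 'a = real] by simp
    also have "\<dots> \<le> real CARD('v set) ^ k"
      using card_alphabet_ge_2[where 'v = 'v] by (intro power_mono) auto
    also have "\<dots> = cover_weight (-1) (prefix k w)"
      unfolding cover_weight_def using card_alphabet_ge_2[where 'v = 'v] by (simp add: powr_realpow)
    finally have "of_nat n \<le> ennreal (\<Sum>v\<in>{prefix k w}. cover_weight (-1) v)"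
      by (simp add: ennreal_of_nat_eq_real_of_nat)
    also have "\<dots> \<le> cover_sum (-1) V" using k(1) by (intro cover_sum_ge) auto
    finally show "of_nat n \<le> cover_sum (-1) V" .
  qed
  then show ?thesis
    unfolding hausdorff_measure_eq_SUP infinity_ennreal_def by (intro ennreal_SUP_eq_top) auto
qed

definition critical_exponent :: "'v::finite set word set \<Rightarrow> real \<Rightarrow> bool" where
  "critical_exponent L a \<longleftrightarrow> (\<forall>\<alpha>. \<alpha> < a \<longrightarrow> hausdorff_measure \<alpha> L = \<infinity>) \<and>
                             (\<forall>\<alpha>. \<alpha> > a \<longrightarrow> hausdorff_measure \<alpha> L = 0)"

lemma critical_exponent_unique:
  assumes "critical_exponent L a" "critical_exponent L b"
  shows "a = b"
proof -
  have False if c: "critical_exponent L c" and d: "critical_exponent L d" and "c < d" for c d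
  proof -
    obtain m where "c < m" "m < d" using dense[OF \<open>c < d\<close>] by blast
    then have "hausdorff_measure m L = 0" "hausdorff_measure m L = \<infinity>"
      using c d unfolding critical_exponent_def by auto
    then show False by simp
  qed
  then show ?thesis using assms by (cases a b rule: linorder_cases) auto
qed

lemma critical_exponent_hausdorff_dim:
  fixes L :: "'v::finite set word set"
  assumes "L \<noteq> {}" and "hausdorff_measure \<alpha>\<^sub>0 L \<noteq> \<infinity>"
  shows "critical_exponent L (hausdorff_dim L)"
proof -
  define S where "S = {\<alpha>. hausdorff_measure \<alpha> L = \<infinity>}"
  have "-1 \<in> S" unfolding S_def using hausdorff_measure_minus_one[OF assms(1)] by simp
  have below: "\<alpha> \<le> \<alpha>\<^sub>0" if "\<alpha> \<in> S" for \<alpha>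
  proof (rule ccontr)
    assume "\<not> \<alpha> \<le> \<alpha>\<^sub>0"
    then have "hausdorff_measure \<alpha> L = 0" using hausdorff_measure_zero_above[OF assms(2)] by simp
    then show False using that unfolding S_def by simp
  qed
  then have bdd: "bdd_above S" by (rule bdd_aboveI)
  have crit: "critical_exponent L (Sup S)"
    unfolding critical_exponent_def
  proof (intro conjI allI impI)
    fix \<alpha> assume "\<alpha> < Sup S"
    then obtain \<alpha>' where "\<alpha>' \<in> S" "\<alpha> < \<alpha>'"
      using less_cSup_iff[OF _ bdd] \<open>-1 \<in> S\<close> by blast
    show "hausdorff_measure \<alpha> L = \<infinity>"
    proof (rule ccontr)
      assume "hausdorff_measure \<alpha> L \<noteq> \<infinity>"
      then have "hausdorff_measure \<alpha>' L = 0"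
        using \<open>\<alpha> < \<alpha>'\<close> by (rule hausdorff_measure_zero_above)
      then show False using \<open>\<alpha>' \<in> S\<close> unfolding S_def by simp
    qed
  next
    fix \<alpha> assume "Sup S < \<alpha>"
    have "(Sup S + \<alpha>) / 2 \<notin> S"
    proof
      assume "(Sup S + \<alpha>) / 2 \<in> S"
      then have "(Sup S + \<alpha>) / 2 \<le> Sup S" by (rule cSup_upper[OF _ bdd])
      then show False using \<open>Sup S < \<alpha>\<close> by simp
    qed
    then show "hausdorff_measure \<alpha> L = 0"
      using \<open>Sup S < \<alpha>\<close> hausdorff_measure_zero_above[of "(Sup S + \<alpha>) / 2" L \<alpha>]
      unfolding S_def by auto
  qed
  have "hausdorff_dim L = Sup S"
    unfolding hausdorff_dim_def critical_exponent_def[symmetric]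
    using crit critical_exponent_unique[OF _ crit] by (rule the_equality)
  then show ?thesis using crit by simp
qed

lemma hausdorff_dim_le:
  fixes L :: "'v::finite set word set"
  assumes "L \<noteq> {}" "hausdorff_measure \<alpha> L \<noteq> \<infinity>"
  shows "hausdorff_dim L \<le> \<alpha>"
proof (rule ccontr)
  assume "\<not> hausdorff_dim L \<le> \<alpha>"
  then show False
    using critical_exponent_hausdorff_dim[OF assms] assms(2) unfolding critical_exponent_def by auto
qed

lemma hausdorff_dim_ge:
  fixes L :: "'v::finite set word set"
  assumes "L \<noteq> {}" "hausdorff_measure \<alpha>\<^sub>0 L \<noteq> \<infinity>" "hausdorff_measure \<alpha> L \<noteq> 0"
  shows "\<alpha> \<le> hausdorff_dim L"
proof (rule ccontr)
  assume "\<not> \<alpha> \<le> hausdorff_dim L"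
  then show False
    using critical_exponent_hausdorff_dim[OF assms(1,2)] assms(3)
    unfolding critical_exponent_def by auto
qed

lemma cover_weight_log:
  fixes v :: "'v::finite set list"
  assumes "0 < \<gamma>"
  shows "cover_weight (log (real CARD('v set)) \<gamma>) v = 1 / \<gamma> ^ length v"
proof -
  let ?r = "real CARD('v set)"
  have r: "2 \<le> ?r" by (rule card_alphabet_ge_2)
  have "cover_weight (log ?r \<gamma>) v = (?r powr (log ?r \<gamma>)) powr (- real (length v))"
    unfolding cover_weight_def powr_powr by simp
  also have "\<dots> = \<gamma> powr (- real (length v))"
    using r assms by (subst powr_log_cancel) auto
  also have "\<dots> = 1 / \<gamma> ^ length v"
    using assms by (simp add: powr_minus powr_realpow divide_inverse)
  finally show ?thesis .
qed

lemma hausdorff_measure_le_of_prefix_count: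
  fixes L :: "'v::finite set word set" and \<gamma> M :: real
  assumes "0 < \<gamma>" and bound: "\<And>n. prefix_count L n \<le> M * \<gamma> ^ n"
  shows "hausdorff_measure (log (real CARD('v set)) \<gamma>) L \<le> ennreal M"
proof -
  let ?a = "log (real CARD('v set)) \<gamma>"
  have "cover_inf ?a L n \<le> ennreal M" for n
  proof -
    have "cover_inf ?a L n \<le> cover_sum ?a (prefixes_of_length n L)"
      unfolding cover_inf_def by (rule INF_lower[OF prefixes_of_length_in_covers])
    also have "\<dots> \<le> ennreal M"
    proof (rule cover_sum_leI)
      fix F assume F: "finite F" "F \<subseteq> prefixes_of_length n L"
      have "cover_weight ?a v = 1 / \<gamma> ^ n" if "v \<in> F" for v
        using that F(2) cover_weight_log[OF assms(1), of v] unfolding prefixes_of_length_def by auto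
      then have "(\<Sum>v\<in>F. cover_weight ?a v) = (\<Sum>v\<in>F. 1 / \<gamma> ^ n)" by simp
      also have "\<dots> = card F / \<gamma> ^ n" by simp
      also have "\<dots> \<le> prefix_count L n / \<gamma> ^ n"
        unfolding prefix_count_def using F assms(1)
        by (intro divide_right_mono of_nat_mono card_mono finite_prefixes_of_length) auto
      also have "\<dots> \<le> M" using bound[of n] assms(1) by (simp add: divide_le_eq)
      finally show "ennreal (\<Sum>v\<in>F. cover_weight ?a v) \<le> ennreal M" by (rule ennreal_leI)
    qed
    finally show ?thesis .
  qed
  then show ?thesis unfolding hausdorff_measure_eq_SUP by (rule SUP_least)
qed

lemma hausdorff_measure_finite_of_prefix_count:
  fixes L :: "'v::finite set word set" and \<gamma> M :: real
  assumes "0 < \<gamma>" and "\<And>n. prefix_count L n \<le> M * \<gamma> ^ n"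
  shows "hausdorff_measure (log (real CARD('v set)) \<gamma>) L \<noteq> \<infinity>"
proof
  assume "hausdorff_measure (log (real CARD('v set)) \<gamma>) L = \<infinity>"
  then show False using hausdorff_measure_le_of_prefix_count[OF assms] by (simp add: top_unique)
qed

lemma hausdorff_dim_le_of_prefix_count:
  fixes L :: "'v::finite set word set" and \<gamma> M :: real
  assumes "L \<noteq> {}" and "0 < \<gamma>" and "\<And>n. prefix_count L n \<le> M * \<gamma> ^ n"
  shows "hausdorff_dim L \<le> log (real CARD('v set)) \<gamma>"
  by (rule hausdorff_dim_le[OF assms(1) hausdorff_measure_finite_of_prefix_count[OF assms(2,3)]])

lemma koenig_step:
  fixes T :: "'a::finite list set"
  assumes take_closed: "\<And>u k. u \<in> T \<Longrightarrow> take k u \<in> T"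
    and extendable: "\<And>n. length u \<le> n \<Longrightarrow> \<exists>u'\<in>T. length u' = n \<and> take (length u) u' = u"
  shows "\<exists>a. \<forall>n\<ge>Suc (length u). \<exists>u'\<in>T. length u' = n \<and> take (Suc (length u)) u' = u @ [a]"
proof -
  have "\<forall>n. \<exists>u'. u' \<in> T \<and> length u' = Suc (length u) + n \<and> take (length u) u' = u"
  proof
    fix n
    show "\<exists>u'. u' \<in> T \<and> length u' = Suc (length u) + n \<and> take (length u) u' = u"
      using extendable[of "Suc (length u) + n"] by auto
  qed
  then obtain U where "\<forall>n. U n \<in> T \<and> length (U n) = Suc (length u) + n \<and> take (length u) (U n) = u"
    by (rule choice[THEN exE])
  then have U: "\<And>n. U n \<in> T" "\<And>n. length (U n) = Suc (length u) + n"
    "\<And>n. take (length u) (U n) = u"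
    by simp_all
  obtain n\<^sub>0 where "infinite {n. U n ! length u = U n\<^sub>0 ! length u}"
    using pigeonhole_infinite[of UNIV "\<lambda>n. U n ! length u"] by auto
  then have a: "\<exists>n\<ge>m. U n ! length u = U n\<^sub>0 ! length u" for m
    unfolding infinite_nat_iff_unbounded_le by blast
  show ?thesis
  proof (intro exI allI impI)
    fix m assume "Suc (length u) \<le> m"
    obtain n where n: "m \<le> n" "U n ! length u = U n\<^sub>0 ! length u" using a by blast
    have "take m (U n) \<in> T" using U(1) by (rule take_closed)
    moreover have "length (take m (U n)) = m" using U(2)[of n] n(1) by simp
    moreover have "take (Suc (length u)) (take m (U n)) = u @ [U n\<^sub>0 ! length u]"
      using \<open>Suc (length u) \<le> m\<close> U(2,3)[of n] n(2) by (simp add: min_def take_Suc_conv_app_nth)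
    ultimately show "\<exists>u'\<in>T. length u' = m \<and> take (Suc (length u)) u' = u @ [U n\<^sub>0 ! length u]"
      by blast
  qed
qed

lemma koenig:
  fixes T :: "'a::finite list set"
  assumes take_closed: "\<And>u k. u \<in> T \<Longrightarrow> take k u \<in> T"
    and unbounded: "\<And>n. \<exists>u\<in>T. length u = n"
  shows "\<exists>x. \<forall>n. prefix n x \<in> T"
proof -
  define P where "P n u \<longleftrightarrow> length u = n \<and> (\<forall>m\<ge>n. \<exists>u'\<in>T. length u' = m \<and> take n u' = u)"
    for n u
  have "P 0 []" unfolding P_def using unbounded by simp
  moreover have "\<exists>u'. P (Suc n) u' \<and> (\<exists>a. u' = u @ [a])" if "P n u" for n u
  proof -
    have "\<exists>u'\<in>T. length u' = m \<and> take (length u) u' = u" if "length u \<le> m" for m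
      using \<open>P n u\<close> that unfolding P_def by auto
    then obtain a where "\<forall>m\<ge>Suc (length u). \<exists>u'\<in>T. length u' = m \<and> take (Suc (length u)) u' = u @ [a]"
      using koenig_step[OF take_closed] by blast
    then have "P (Suc n) (u @ [a])" using that unfolding P_def by simp
    then show ?thesis by blast
  qed
  ultimately obtain f where f: "\<And>n. P n (f n)" "\<And>n. \<exists>a. f (Suc n) = f n @ [a]"
    using dependent_nat_choice[of P "\<lambda>n u u'. \<exists>a. u' = u @ [a]"] by blast
  define x where "x n = f (Suc n) ! n" for n
  have "prefix n x = f n" for n
  proof (induction n)
    case 0
    then show ?case using f(1)[of 0] unfolding P_def by simp
  next
    case (Suc n)
    obtain a where "f (Suc n) = f n @ [a]" using f(2) by blast
    moreover have "length (f n) = n" using f(1) unfolding P_def by simp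
    ultimately show ?case using Suc.IH unfolding x_def by (simp add: nth_append)
  qed
  moreover have "f n \<in> T" for n
  proof -
    obtain u' where "u' \<in> T" "length u' = n" "take n u' = f n"
      using f(1)[of n] unfolding P_def by blast
    then show ?thesis by simp
  qed
  ultimately show ?thesis by (intro exI[of _ x]) simp
qed

lemma inv_lang_cover_level:
  fixes B :: "'v::finite bexp"
  assumes cover: "\<And>w. w \<in> inv_lang B \<Longrightarrow> \<exists>k. prefix k w \<in> V"
  shows "\<exists>n. \<forall>u\<in>prefixes_of_length n (inv_lang B). \<exists>k\<le>n. take k u \<in> V"
proof (rule ccontr)
  define T where "T = {u \<in> prefixes_of (inv_lang B). \<forall>k\<le>length u. take k u \<notin> V}"
  assume contra: "\<not> ?thesis"
  have "\<exists>u\<in>T. length u = n" for n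
  proof -
    obtain u where "u \<in> prefixes_of_length n (inv_lang B)" "\<forall>k\<le>n. take k u \<notin> V"
      using contra by blast
    then show ?thesis unfolding T_def prefixes_of_length_def by auto
  qed
  moreover have "take k u \<in> T" if "u \<in> T" for u k
  proof -
    have "take j (take k u) \<notin> V" if "j \<le> length (take k u)" for j
    proof -
      from that have "j \<le> k" "j \<le> length u" by simp_all
      then show ?thesis using \<open>u \<in> T\<close> unfolding T_def by simp
    qed
    then show ?thesis using \<open>u \<in> T\<close> unfolding T_def by (simp add: prefixes_of_take)
  qed
  ultimately obtain x where x: "\<And>n. prefix n x \<in> T" using koenig by blast
  then have "x \<in> inv_lang B" unfolding T_def by (intro in_inv_lang_if_prefixes) auto
  then obtain k where "prefix k x \<in> V" using cover by blast
  moreover have "take k (prefix k x) \<notin> V" using x[of k] unfolding T_def by simp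
  ultimately show False by simp
qed

lemma sum_inverse_power_length_ge:
  fixes B :: "'v::finite bexp" and F :: "'v set list set" and \<beta> C :: real
  assumes "0 < \<beta>" "0 < C"
    and lower: "\<beta> ^ n \<le> prefix_count (inv_lang B) n"
    and upper: "\<And>m. prefix_count (inv_lang B) m \<le> C * \<beta> ^ m"
    and "finite F" and short: "\<And>v. v \<in> F \<Longrightarrow> length v \<le> n"
    and hit: "\<And>u. u \<in> prefixes_of_length n (inv_lang B) \<Longrightarrow> \<exists>v\<in>F. take (length v) u = v"
  shows "1 / C \<le> (\<Sum>v\<in>F. 1 / \<beta> ^ length v)"
proof -
  let ?P = "prefixes_of_length n (inv_lang B)"
  define E where "E v = {u \<in> ?P. take (length v) u = v}" for v
  have "finite (E v)" for v
    unfolding E_def by (rule finite_subset[OF _ finite_prefixes_of_length]) auto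
  moreover have "?P \<subseteq> (\<Union>v\<in>F. E v)" using hit unfolding E_def by blast
  ultimately have "card ?P \<le> card (\<Union>v\<in>F. E v)"
    using \<open>finite F\<close> by (intro card_mono finite_UN_I)
  also have "\<dots> \<le> (\<Sum>v\<in>F. card (E v))" by (rule card_UN_le[OF \<open>finite F\<close>])
  finally have "real (card ?P) \<le> (\<Sum>v\<in>F. real (card (E v)))"
    by (simp flip: of_nat_sum)
  with lower have "\<beta> ^ n \<le> (\<Sum>v\<in>F. real (card (E v)))"
    unfolding prefix_count_def by (rule order_trans)
  also have "\<dots> \<le> (\<Sum>v\<in>F. C * \<beta> ^ n * (1 / \<beta> ^ length v))"
  proof (rule sum_mono)
    fix v assume "v \<in> F"
    then have "length v \<le> n" by (rule short)
    then have "card (E v) \<le> prefix_count (inv_lang B) (n - length v)"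
      unfolding E_def by (rule card_prefixes_with_prefix_le)
    then have "real (card (E v)) \<le> prefix_count (inv_lang B) (n - length v)" by simp
    also have "\<dots> \<le> C * \<beta> ^ (n - length v)" by (rule upper)
    also have "\<dots> = C * \<beta> ^ n * (1 / \<beta> ^ length v)"
      using \<open>length v \<le> n\<close> \<open>0 < \<beta>\<close> by (simp add: power_diff)
    finally show "real (card (E v)) \<le> C * \<beta> ^ n * (1 / \<beta> ^ length v)" .
  qed
  also have "\<dots> = \<beta> ^ n * (C * (\<Sum>v\<in>F. 1 / \<beta> ^ length v))"
    by (simp only: sum_distrib_left mult_ac)
  finally have "\<beta> ^ n * 1 \<le> \<beta> ^ n * (C * (\<Sum>v\<in>F. 1 / \<beta> ^ length v))" by simp
  then have "1 \<le> C * (\<Sum>v\<in>F. 1 / \<beta> ^ length v)"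
    using \<open>0 < \<beta>\<close> by (simp only: mult_le_cancel_left_pos zero_less_power)
  then have "1 / C \<le> C * (\<Sum>v\<in>F. 1 / \<beta> ^ length v) / C"
    using \<open>0 < C\<close> by (rule divide_right_mono[OF _ less_imp_le])
  moreover have "C * (\<Sum>v\<in>F. 1 / \<beta> ^ length v) / C = (\<Sum>v\<in>F. 1 / \<beta> ^ length v)"
    using \<open>0 < C\<close> by (intro nonzero_mult_div_cancel_left) simp
  ultimately show ?thesis by (simp only:)
qed

lemma hausdorff_measure_ge_of_prefix_count:
  fixes B :: "'v::finite bexp" and \<beta> C :: real
  assumes "0 < \<beta>" "0 < C"
    and lower: "\<And>n. \<beta> ^ n \<le> prefix_count (inv_lang B) n"
    and upper: "\<And>n. prefix_count (inv_lang B) n \<le> C * \<beta> ^ n"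
  shows "ennreal (1 / C) \<le> hausdorff_measure (log (real CARD('v set)) \<beta>) (inv_lang B)"
proof -
  let ?a = "log (real CARD('v set)) \<beta>"
  have "ennreal (1 / C) \<le> cover_sum ?a V" if "V \<in> covers 0 (inv_lang B)" for V
  proof -
    have "\<exists>k. prefix k w \<in> V" if "w \<in> inv_lang B" for w
      using \<open>V \<in> covers 0 (inv_lang B)\<close> that unfolding covers_def by blast
    then obtain n where n: "\<forall>u\<in>prefixes_of_length n (inv_lang B). \<exists>k\<le>n. take k u \<in> V"
      using inv_lang_cover_level by blast
    define F where "F = {v \<in> V. length v \<le> n}"
    have "finite F"
      unfolding F_def by (rule finite_subset[OF _ finite_lists_length_le[of UNIV n]]) auto
    moreover have "F \<subseteq> V" unfolding F_def by blast
    ultimately have F: "finite F" "F \<subseteq> V" by blast+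
    have "1 / C \<le> (\<Sum>v\<in>F. 1 / \<beta> ^ length v)"
    proof (rule sum_inverse_power_length_ge[OF assms(1,2) lower upper F(1)])
      show "length v \<le> n" if "v \<in> F" for v using that unfolding F_def by simp
      fix u assume "u \<in> prefixes_of_length n (inv_lang B)"
      then obtain k where "k \<le> n" "take k u \<in> V" "length u = n"
        using n unfolding prefixes_of_length_def by blast
      then have "take k u \<in> F" "take (length (take k u)) u = take k u" unfolding F_def by simp_all
      then show "\<exists>v\<in>F. take (length v) u = v" by blast
    qed
    also have "\<dots> = (\<Sum>v\<in>F. cover_weight ?a v)"
      by (intro sum.cong refl) (rule cover_weight_log[OF assms(1), symmetric])
    finally have "ennreal (1 / C) \<le> ennreal (\<Sum>v\<in>F. cover_weight ?a v)" by (rule ennreal_leI)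
    also have "\<dots> \<le> cover_sum ?a V" by (rule cover_sum_ge[OF F])
    finally show ?thesis .
  qed
  then have "ennreal (1 / C) \<le> cover_inf ?a (inv_lang B) 0"
    unfolding cover_inf_def by (rule INF_greatest)
  also have "\<dots> \<le> hausdorff_measure ?a (inv_lang B)" by (rule cover_inf_le_hausdorff_measure)
  finally show ?thesis .
qed

lemma hausdorff_dim_eq_of_prefix_count:
  fixes B :: "'v::finite bexp" and \<beta> C :: real
  assumes "inv_lang B \<noteq> {}" "0 < \<beta>" "0 < C"
    and lower: "\<And>n. \<beta> ^ n \<le> prefix_count (inv_lang B) n"
    and upper: "\<And>n. prefix_count (inv_lang B) n \<le> C * \<beta> ^ n"
  shows "hausdorff_dim (inv_lang B) = log (real CARD('v set)) \<beta>"
proof (rule antisym)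
  show "hausdorff_dim (inv_lang B) \<le> log (real CARD('v set)) \<beta>"
    by (rule hausdorff_dim_le_of_prefix_count[OF assms(1,2) upper])
  have "hausdorff_measure (log (real CARD('v set)) \<beta>) (inv_lang B) \<noteq> 0"
  proof
    assume "hausdorff_measure (log (real CARD('v set)) \<beta>) (inv_lang B) = 0"
    then have "ennreal (1 / C) \<le> 0"
      using hausdorff_measure_ge_of_prefix_count[OF assms(2,3) lower upper] by simp
    then show False using \<open>0 < C\<close> by simp
  qed
  then show "log (real CARD('v set)) \<beta> \<le> hausdorff_dim (inv_lang B)"
    by (rule hausdorff_dim_ge[OF assms(1) hausdorff_measure_finite_of_prefix_count[OF assms(2) upper]])
qed

section \<open>Almost multiplicative sequences\<close>

lemma submult_power_le:
  fixes p :: "nat \<Rightarrow> nat"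
  assumes sub: "\<And>a b. p (a + b) \<le> p a * p b" and "p 0 \<le> 1"
  shows "p (k * n) \<le> p n ^ k"
proof (induction k)
  case 0
  then show ?case using \<open>p 0 \<le> 1\<close> by simp
next
  case (Suc k)
  have "p (Suc k * n) \<le> p n * p (k * n)" using sub[of n "k * n"] by simp
  also have "\<dots> \<le> p n * p n ^ k" using Suc.IH by simp
  finally show ?case by simp
qed

lemma submult_le_power_div:
  fixes p :: "nat \<Rightarrow> nat"
  assumes sub: "\<And>a b. p (a + b) \<le> p a * p b" and "p 0 \<le> 1" and "mono p" and "0 < n"
  shows "p m \<le> p n ^ (m div n + 1)"
proof -
  have "p m \<le> p (m div n * n) * p (m mod n)" using sub[of "m div n * n" "m mod n"] by simp
  also have "\<dots> \<le> p n ^ (m div n) * p n"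
    using submult_power_le[OF sub \<open>p 0 \<le> 1\<close>] monoD[OF \<open>mono p\<close>, of "m mod n" n] \<open>0 < n\<close>
    by (intro mult_mono) auto
  finally show ?thesis by (simp add: mult.commute)
qed

lemma almost_supermult_power_le:
  fixes p :: "nat \<Rightarrow> nat"
  assumes sup: "\<And>a b. p a * p b \<le> (D + 1) * p (a + b + D)" and "1 \<le> p 0"
  shows "(p N / (real D + 1)) ^ k \<le> p (k * (N + D))"
proof (induction k)
  case 0
  then show ?case using \<open>1 \<le> p 0\<close> by simp
next
  case (Suc k)
  have "(p N / (real D + 1)) ^ Suc k = (p N / (real D + 1)) ^ k * (p N / (real D + 1))"
    by simp
  also have "\<dots> \<le> p (k * (N + D)) * (p N / (real D + 1))"
    by (rule mult_right_mono[OF Suc.IH]) simp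
  also have "\<dots> \<le> p (Suc k * (N + D))"
    using of_nat_mono[OF sup[of "k * (N + D)" N], where 'a = real]
    by (simp add: field_simps add.assoc)
  finally show ?case .
qed

lemma le_if_frequently_power_le:
  fixes a y P :: real
  assumes "0 < y" and frequent: "\<And>k. \<exists>m\<ge>k. a ^ m \<le> y ^ m * P"
  shows "a \<le> y"
proof (rule ccontr)
  assume "\<not> a \<le> y"
  then have "1 < a / y" using \<open>0 < y\<close> by simp
  then obtain k where k: "P < (a / y) ^ k" using real_arch_pow by blast
  obtain m where "k \<le> m" "a ^ m \<le> y ^ m * P" using frequent by blast
  have "(a / y) ^ k \<le> (a / y) ^ m" using \<open>1 < a / y\<close> \<open>k \<le> m\<close> by (simp add: power_increasing)
  also have "\<dots> \<le> P"
    using \<open>a ^ m \<le> y ^ m * P\<close> \<open>0 < y\<close> by (simp add: power_divide divide_le_eq mult.commute)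
  finally show False using k by simp
qed

lemma almost_supermult_growth:
  fixes p :: "nat \<Rightarrow> nat"
  assumes pos: "\<And>n. 1 \<le> p n" and "p 0 \<le> 1" and "mono p"
    and sub: "\<And>a b. p (a + b) \<le> p a * p b"
    and sup: "\<And>a b. p a * p b \<le> (D + 1) * p (a + b + D)" and "1 \<le> D"
  shows "\<exists>(\<beta>::real) (C::real). 0 < \<beta> \<and> 0 < C \<and> (\<forall>n. \<beta> ^ n \<le> p n \<and> p n \<le> C * \<beta> ^ n)"
proof -
  \<comment> \<open>Fekete-type argument: the roots \<open>f N\<close> coming from the supermultiplicative bound lie
    below the roots \<open>root n (p n)\<close> coming from submultiplicativity; \<open>\<beta>\<close> is their supremum\<close>
  define f where "f N = root (N + D) (p N / (real D + 1))" for N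
  have f_pos: "0 < f N" for N
    unfolding f_def using pos[of N] \<open>1 \<le> D\<close> by simp
  have f_le: "f N \<le> root n (p n)" if "0 < n" for N n
  proof (rule le_if_frequently_power_le)
    let ?\<rho> = "root n (p n)"
    show "0 < ?\<rho>" using pos[of n] \<open>0 < n\<close> by simp
    have "f N ^ (k * (N + D)) \<le> ?\<rho> ^ (k * (N + D)) * ?\<rho> ^ n" for k
    proof -
      have "f N ^ (k * (N + D)) = (p N / (real D + 1)) ^ k"
        unfolding f_def using \<open>1 \<le> D\<close> by (simp add: power_mult mult.commute[of k])
      also have "\<dots> \<le> p (k * (N + D))" by (rule almost_supermult_power_le[OF sup pos])
      also have "\<dots> \<le> p n ^ (k * (N + D) div n + 1)"
        using submult_le_power_div[OF sub \<open>p 0 \<le> 1\<close> \<open>mono p\<close> \<open>0 < n\<close>] of_nat_mono by fastforce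
      also have "\<dots> = ?\<rho> ^ (n * (k * (N + D) div n) + n)"
        using \<open>0 < n\<close> by (simp add: power_add power_mult)
      also have "\<dots> \<le> ?\<rho> ^ (k * (N + D) + n)"
        using pos[of n] \<open>0 < n\<close> by (intro power_increasing add_right_mono) auto
      finally show ?thesis by (simp add: power_add)
    qed
    then show "\<exists>m\<ge>k. f N ^ m \<le> ?\<rho> ^ m * ?\<rho> ^ n" for k
      using \<open>1 \<le> D\<close> by (intro exI[of _ "k * (N + D)"]) auto
  qed
  have bdd: "bdd_above (range f)" by (rule bdd_aboveI2[where M = "root 1 (p 1)"]) (rule f_le, simp)
  define \<beta> where "\<beta> = (SUP N. f N)"
  have f_le_\<beta>: "f N \<le> \<beta>" for N unfolding \<beta>_def by (rule cSUP_upper[OF _ bdd]) simp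
  have "0 < \<beta>" using f_pos[of 0] f_le_\<beta>[of 0] by linarith
  have lower: "\<beta> ^ n \<le> p n" for n
  proof (cases "n = 0")
    case True
    then show ?thesis using pos[of 0] by simp
  next
    case False
    then have "\<beta> \<le> root n (p n)" unfolding \<beta>_def using f_le by (auto intro: cSUP_least)
    then have "\<beta> ^ n \<le> root n (p n) ^ n" using \<open>0 < \<beta>\<close> by (intro power_mono) auto
    then show ?thesis using False by simp
  qed
  have upper: "p n \<le> (real D + 1) * \<beta> ^ D * \<beta> ^ n" for n
  proof -
    have "p n / (real D + 1) = f n ^ (n + D)" unfolding f_def using \<open>1 \<le> D\<close> by simp
    also have "\<dots> \<le> \<beta> ^ (n + D)" using f_pos[of n] f_le_\<beta>[of n] by (intro power_mono) auto
    finally show ?thesis by (simp add: field_simps power_add)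
  qed
  show ?thesis using \<open>0 < \<beta>\<close> lower upper by (intro exI[of _ \<beta>] exI[of _ "(real D + 1) * \<beta> ^ D"]) auto
qed

lemma convolution_bound_gives_slower_term:
  fixes p q :: "nat \<Rightarrow> nat" and \<beta> C :: real and K c :: nat
  assumes "0 < \<beta>" and lower: "\<And>n. \<beta> ^ n \<le> p n" and upper: "\<And>n. p n \<le> C * \<beta> ^ n"
    and conv: "\<And>n. (\<Sum>i\<le>n. q i * p (n - i)) \<le> K * p (n + c)"
  shows "\<exists>m. q m < \<beta> ^ m"
proof (rule ccontr)
  assume "\<not> ?thesis"
  then have q: "\<beta> ^ m \<le> q m" for m by (simp add: not_less)
  have "real (n + 1) \<le> K * C * \<beta> ^ c" for n
  proof -
    have "real (n + 1) * \<beta> ^ n = (\<Sum>i\<le>n. \<beta> ^ i * \<beta> ^ (n - i))"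
      by (simp flip: power_add)
    also have "\<dots> \<le> (\<Sum>i\<le>n. real (q i * p (n - i)))"
      using q lower \<open>0 < \<beta>\<close> by (intro sum_mono) (simp add: mult_mono)
    also have "\<dots> \<le> K * real (p (n + c))"
      using of_nat_mono[OF conv[of n], where 'a = real] by simp
    also have "\<dots> \<le> K * (C * \<beta> ^ (n + c))" using upper by (simp add: mult_left_mono)
    finally have "real (n + 1) * \<beta> ^ n \<le> (K * C * \<beta> ^ c) * \<beta> ^ n"
      by (simp add: power_add mult_ac)
    then show ?thesis using \<open>0 < \<beta>\<close> by (metis mult_le_cancel_right_pos zero_less_power)
  qed
  moreover have "K * C * \<beta> ^ c < real (nat \<lceil>K * C * \<beta> ^ c\<rceil> + 1)" by linarith
  ultimately show False by (meson not_le)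
qed

lemma submult_growth_below:
  fixes q :: "nat \<Rightarrow> nat" and \<beta> :: real
  assumes pos: "\<And>n. 1 \<le> q n" and "q 0 \<le> 1" and sub: "\<And>a b. q (a + b) \<le> q a * q b"
    and "0 < \<beta>" and "q m < \<beta> ^ m"
  shows "\<exists>(\<gamma>::real) (M::real). 0 < \<gamma> \<and> \<gamma> < \<beta> \<and> (\<forall>n. q n \<le> M * \<gamma> ^ n)"
proof -
  have "0 < m" using \<open>q m < \<beta> ^ m\<close> pos[of 0] by (cases m) auto
  define \<gamma> where "\<gamma> = root m (q m)"
  have "1 \<le> \<gamma>" unfolding \<gamma>_def using pos[of m] \<open>0 < m\<close> by simp
  have "\<gamma> < \<beta>"
    unfolding \<gamma>_def using real_root_less_mono[OF \<open>0 < m\<close> \<open>q m < \<beta> ^ m\<close>] \<open>0 < m\<close> \<open>0 < \<beta>\<close>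
    by (simp add: real_root_power_cancel)
  define M where "M = real (Max (q ` {..<m}))"
  have "q n \<le> M * \<gamma> ^ n" for n
  proof -
    have "q n \<le> q (n div m * m) * q (n mod m)" using sub[of "n div m * m" "n mod m"] by simp
    also have "\<dots> \<le> q m ^ (n div m) * Max (q ` {..<m})"
      using submult_power_le[OF sub \<open>q 0 \<le> 1\<close>] \<open>0 < m\<close> by (intro mult_mono Max_ge) auto
    finally have "q n \<le> \<gamma> ^ (m * (n div m)) * M"
      unfolding M_def \<gamma>_def using \<open>0 < m\<close> of_nat_mono by (fastforce simp: power_mult)
    also have "\<dots> \<le> \<gamma> ^ n * M"
      by (intro mult_right_mono power_increasing[OF times_div_less_eq_dividend \<open>1 \<le> \<gamma>\<close>])
        (simp add: M_def)
    finally show ?thesis by (simp add: mult.commute)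
  qed
  then show ?thesis using \<open>1 \<le> \<gamma>\<close> \<open>\<gamma> < \<beta>\<close> by (intro exI[of _ \<gamma>] exI[of _ M]) auto
qed

section \<open>Strongly connected invariants\<close>

definition reset_word :: "'a word set \<Rightarrow> 'a list \<Rightarrow> bool" where
  "reset_word L z \<longleftrightarrow> (\<forall>x\<in>L. z \<frown> x \<in> L)"

lemma reset_word_append_prefix:
  assumes "reset_word L z" "y \<in> prefixes_of L"
  shows "z @ y \<in> prefixes_of L"
proof -
  obtain x where "y \<frown> x \<in> L" using assms(2) by (rule prefixes_ofE)
  then have "(z @ y) \<frown> x \<in> L" using assms(1) unfolding reset_word_def by (metis conc_conc)
  then show ?thesis by (rule prefixes_ofI)
qed

lemma strongly_connected_reset_word:
  assumes "strongly_connected L" "u \<in> prefixes_of L"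
  obtains v where "reset_word L (u @ v)"
  using assms unfolding strongly_connected_def state_of_def reset_word_def by blast

lemma reset_word_same_last:
  assumes "u \<in> prefixes_of (inv_lang B)" "u \<noteq> []" "u' \<in> prefixes_of (inv_lang B)" "u' \<noteq> []"
    and "last u = last u'" and "reset_word (inv_lang B) (u @ v)"
  shows "reset_word (inv_lang B) (u' @ v)"
  unfolding reset_word_def
proof
  fix x assume "x \<in> inv_lang B"
  then have ux: "u \<frown> (v \<frown> x) \<in> inv_lang B" using assms(6) unfolding reset_word_def by simp
  then have vx: "v \<frown> x \<in> inv_lang B" using inv_lang_suffix[of _ B "length u"] by fastforce
  have "u' \<frown> (v \<frown> x) \<in> inv_lang B"
    using ux assms(5) conc_in_inv_lang_iff[OF assms(1,2) vx] conc_in_inv_lang_iff[OF assms(3,4) vx]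
    by simp
  then show "(u' @ v) \<frown> x \<in> inv_lang B" by simp
qed

lemma strongly_connected_inv_lang_bounded_reset:
  fixes B :: "'v::finite bexp"
  assumes "strongly_connected (inv_lang B)"
  obtains D ext where "1 \<le> D"
    and "\<And>u. u \<in> prefixes_of (inv_lang B) \<Longrightarrow>
      length (ext u) \<le> D \<and> reset_word (inv_lang B) (u @ ext u)"
proof -
  let ?A = "prefixes_of (inv_lang B)"
  \<comment> \<open>by \<open>reset_word_same_last\<close>, one extension per last letter suffices\<close>
  define v where "v a = (SOME v. \<exists>u\<in>?A. u \<noteq> [] \<and> last u = a \<and> reset_word (inv_lang B) (u @ v))"
    for a
  define ext where "ext u = (if u = [] then [] else v (last u))" for u
  have "reset_word (inv_lang B) (u @ ext u)" if u: "u \<in> ?A" for u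
  proof (cases "u = []")
    case True
    then show ?thesis unfolding ext_def reset_word_def by simp
  next
    case False
    obtain v\<^sub>0 where "reset_word (inv_lang B) (u @ v\<^sub>0)"
      using strongly_connected_reset_word[OF assms u] .
    then have "\<exists>v. \<exists>u'\<in>?A. u' \<noteq> [] \<and> last u' = last u \<and> reset_word (inv_lang B) (u' @ v)"
      using u False by blast
    then have "\<exists>u'\<in>?A. u' \<noteq> [] \<and> last u' = last u \<and> reset_word (inv_lang B) (u' @ v (last u))"
      unfolding v_def by (rule someI_ex)
    then obtain u' where "u' \<in> ?A" "u' \<noteq> []" "last u' = last u"
      "reset_word (inv_lang B) (u' @ v (last u))"
      by blast
    then show ?thesis
      using reset_word_same_last[of u' B u "v (last u)"] u False unfolding ext_def by simp
  qed
  moreover have "length (ext u) \<le> Max (range (\<lambda>a. length (v a))) + 1" for u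
    unfolding ext_def by (auto intro: le_SucI Max_ge)
  ultimately show ?thesis by (intro that[of "Max (range (\<lambda>a. length (v a))) + 1" ext]) auto
qed

lemma prefix_count_almost_supermult:
  fixes L :: "'a::finite word set"
  assumes "L \<noteq> {}"
    and ext: "\<And>u. u \<in> prefixes_of L \<Longrightarrow> length (ext u) \<le> D \<and> reset_word L (u @ ext u)"
  shows "prefix_count L a * prefix_count L b \<le> (D + 1) * prefix_count L (a + b + D)"
proof -
  let ?P = "\<lambda>n. prefixes_of_length n L"
  let ?f = "\<lambda>(u, y). (length (ext u), u @ ext u @ y)"
  have "inj_on ?f (?P a \<times> ?P b)"
  proof (rule inj_onI)
    fix p p' assume p: "p \<in> ?P a \<times> ?P b" "p' \<in> ?P a \<times> ?P b" and "?f p = ?f p'"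
    obtain u y u' y' where [simp]: "p = (u, y)" "p' = (u', y')" by (cases p, cases p')
    have "length u = length u'" "u @ ext u @ y = u' @ ext u' @ y'"
      using p \<open>?f p = ?f p'\<close> unfolding prefixes_of_length_def by auto
    then have "u = u' \<and> ext u @ y = ext u' @ y'" using append_eq_append_conv by blast
    then show "p = p'" by auto
  qed
  moreover have "?f ` (?P a \<times> ?P b) \<subseteq> Sigma {..D} (\<lambda>t. ?P (a + b + t))"
    using ext reset_word_append_prefix unfolding prefixes_of_length_def by fastforce
  ultimately have "card (?P a \<times> ?P b) \<le> card (Sigma {..D} (\<lambda>t. ?P (a + b + t)))"
    by (intro card_inj_on_le finite_SigmaI finite_prefixes_of_length) auto
  also have "\<dots> = (\<Sum>t\<le>D. prefix_count L (a + b + t))"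
    by (simp add: card_SigmaI finite_prefixes_of_length prefix_count_def)
  also have "\<dots> \<le> (\<Sum>t\<le>D. prefix_count L (a + b + D))"
    using monoD[OF prefix_count_mono[OF assms(1)]] by (intro sum_mono) auto
  finally show ?thesis by (simp add: prefix_count_def card_cartesian_product)
qed

lemma strongly_connected_inv_lang_growth:
  fixes B :: "'v::finite bexp"
  assumes "strongly_connected (inv_lang B)" "inv_lang B \<noteq> {}"
  shows "\<exists>(\<beta>::real) (C::real). 0 < \<beta> \<and> 0 < C \<and>
    (\<forall>n. \<beta> ^ n \<le> prefix_count (inv_lang B) n \<and> prefix_count (inv_lang B) n \<le> C * \<beta> ^ n)"
proof -
  obtain D ext where "1 \<le> D"
    and ext: "\<And>u. u \<in> prefixes_of (inv_lang B) \<Longrightarrow>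
      length (ext u) \<le> D \<and> reset_word (inv_lang B) (u @ ext u)"
    using strongly_connected_inv_lang_bounded_reset[OF assms(1)] by blast
  show ?thesis
    by (rule almost_supermult_growth[OF prefix_count_pos[OF assms(2)] prefix_count_zero_le
          prefix_count_mono[OF assms(2)] prefix_count_inv_lang_submult
          prefix_count_almost_supermult[OF assms(2) ext] \<open>1 \<le> D\<close>])
qed

lemma reset_word_with_forbidden_step:
  assumes "strongly_connected (inv_lang B\<^sub>2)" "w \<in> inv_lang B\<^sub>2" "w \<notin> inv_lang B\<^sub>1"
  obtains h j where "reset_word (inv_lang B\<^sub>2) h" "Suc j < length h"
    "\<not> inv_step B\<^sub>1 (h ! j) (h ! Suc j)"
proof -
  obtain j where j: "\<not> inv_step B\<^sub>1 (w j) (w (Suc j))" using assms(3) unfolding in_inv_lang_iff by blast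
  obtain v where "reset_word (inv_lang B\<^sub>2) (prefix (Suc (Suc j)) w @ v)"
    using strongly_connected_reset_word[OF assms(1) prefix_in_prefixes_of[OF assms(2)]] .
  then show thesis using j by (intro that[of _ j]) (auto simp: nth_append)
qed

definition first_occurrence :: "'a \<Rightarrow> 'a \<Rightarrow> 'a list \<Rightarrow> nat" where
  "first_occurrence a b r = (LEAST k. Suc k < length r \<and> r ! k = a \<and> r ! Suc k = b)"

lemma first_occurrence_after_prefix:
  assumes "w \<in> prefixes_of (inv_lang B)" "Suc j < length h" "\<not> inv_step B (h ! j) (h ! Suc j)"
  shows "first_occurrence (h ! j) (h ! Suc j) (w @ v @ h @ y) \<le> length w + length v + j"
    and "length w \<le> Suc (first_occurrence (h ! j) (h ! Suc j) (w @ v @ h @ y))"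
proof -
  let ?r = "w @ v @ h @ y"
  let ?occ = "\<lambda>k. Suc k < length ?r \<and> ?r ! k = h ! j \<and> ?r ! Suc k = h ! Suc j"
  let ?k = "first_occurrence (h ! j) (h ! Suc j) ?r"
  have "?occ (length w + length v + j)" using assms(2) by (simp add: nth_append)
  then show "?k \<le> length w + length v + j"
    unfolding first_occurrence_def by (rule Least_le)
  have "?occ ?k"
    unfolding first_occurrence_def using \<open>?occ (length w + length v + j)\<close> by (rule LeastI)
  show "length w \<le> Suc ?k"
  proof (rule ccontr)
    assume "\<not> length w \<le> Suc ?k"
    then have "Suc ?k < length w" by simp
    then have "?r ! ?k = w ! ?k" "?r ! Suc ?k = w ! Suc ?k" by (simp_all add: nth_append)
    then have "inv_step B (?r ! ?k) (?r ! Suc ?k)"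
      using inv_step_nth_prefix[OF assms(1) \<open>Suc ?k < length w\<close>] by simp
    then show False using \<open>?occ ?k\<close> assms(3) by simp
  qed
qed

lemma prefix_count_convolution_le:
  fixes B\<^sub>1 B\<^sub>2 :: "'v::finite bexp"
  assumes "inv_lang B\<^sub>1 \<subseteq> inv_lang B\<^sub>2"
    and ext: "\<And>u. u \<in> prefixes_of (inv_lang B\<^sub>2) \<Longrightarrow>
      length (ext u) \<le> D \<and> reset_word (inv_lang B\<^sub>2) (u @ ext u)"
    and "inv_lang B\<^sub>2 \<noteq> {}" and h: "reset_word (inv_lang B\<^sub>2) h" "Suc j < length h"
    "\<not> inv_step B\<^sub>1 (h ! j) (h ! Suc j)"
  shows "(\<Sum>i\<le>n. prefix_count (inv_lang B\<^sub>1) i * prefix_count (inv_lang B\<^sub>2) (n - i))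
    \<le> ((D + 1) * (D + length h + 2)) * prefix_count (inv_lang B\<^sub>2) (n + (length h + D))"
proof -
  let ?P\<^sub>1 = "\<lambda>n. prefixes_of_length n (inv_lang B\<^sub>1)"
  let ?P\<^sub>2 = "\<lambda>n. prefixes_of_length n (inv_lang B\<^sub>2)"
  let ?first = "first_occurrence (h ! j) (h ! Suc j)"
  \<comment> \<open>the first step of \<open>R w y\<close> forbidden in \<open>L\<^sub>1\<close> starts at or after the last letter of \<open>w\<close> and
    at the latest inside \<open>h\<close>, so its distance to the end of \<open>w\<close> is bounded and recovers \<open>i\<close>\<close>
  define R where "R w y = w @ ext w @ h @ y" for w y
  define \<Phi> where "\<Phi> = (\<lambda>(i, w, y). (length (ext w), i + length (ext w) + j + 1 - ?first (R w y), R w y))"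
  define Dom where "Dom = Sigma {..n} (\<lambda>i. ?P\<^sub>1 i \<times> ?P\<^sub>2 (n - i))"
  define T where "T = Sigma {..D} (\<lambda>t. {..D + length h + 1} \<times> ?P\<^sub>2 (n + length h + t))"
  have Dom: "length w = i" "length y = n - i" "length (ext w) \<le> D"
    "R w y \<in> ?P\<^sub>2 (n + length h + length (ext w))"
    "?first (R w y) \<le> i + length (ext w) + j" "i \<le> Suc (?first (R w y))"
    if "(i, w, y) \<in> Dom" for i w y
  proof -
    from that have "i \<le> n" and w: "w \<in> prefixes_of (inv_lang B\<^sub>1)" "length w = i"
      and y: "y \<in> prefixes_of (inv_lang B\<^sub>2)" "length y = n - i"
      unfolding Dom_def prefixes_of_length_def by auto
    have "w \<in> prefixes_of (inv_lang B\<^sub>2)" using w(1) assms(1) unfolding prefixes_of_def by blast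
    note ext_w = ext[OF this]
    show "length w = i" "length y = n - i" "length (ext w) \<le> D" by (fact w(2) y(2) ext_w[THEN conjunct1])+
    have "(w @ ext w) @ h @ y \<in> prefixes_of (inv_lang B\<^sub>2)"
      using ext_w h(1) y(1) by (intro reset_word_append_prefix) auto
    then show "R w y \<in> ?P\<^sub>2 (n + length h + length (ext w))"
      unfolding R_def prefixes_of_length_def using \<open>i \<le> n\<close> w(2) y(2) by simp
    show "?first (R w y) \<le> i + length (ext w) + j" "i \<le> Suc (?first (R w y))"
      unfolding R_def using first_occurrence_after_prefix[OF w(1) h(2,3)] w(2) by auto
  qed
  have inj: "inj_on \<Phi> Dom"
  proof (rule inj_onI)
    fix x x' assume in_Dom: "x \<in> Dom" "x' \<in> Dom" and "\<Phi> x = \<Phi> x'"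
    obtain i w y i' w' y' where x: "x = (i, w, y)" "x' = (i', w', y')"
      by (cases x rule: prod_cases3, cases x' rule: prod_cases3)
    have eq: "length (ext w) = length (ext w')" "R w y = R w' y'"
      "i + length (ext w) + j + 1 - ?first (R w y) = i' + length (ext w') + j + 1 - ?first (R w' y')"
      using \<open>\<Phi> x = \<Phi> x'\<close> unfolding x \<Phi>_def by auto
    note facts = Dom[OF in_Dom(1)[unfolded x]] Dom[OF in_Dom(2)[unfolded x]]
    have "?first (R w' y') \<le> i + length (ext w') + j"
      "i + length (ext w') + j + 1 - ?first (R w' y') = i' + length (ext w') + j + 1 - ?first (R w' y')"
      using eq facts(5) by simp_all
    then have "i = i'" using facts(11) by linarith
    have "w = take i (R w y)" "y = drop (i + length (ext w) + length h) (R w y)"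
      using facts(1) unfolding R_def by simp_all
    moreover have "w' = take i (R w' y')" "y' = drop (i + length (ext w') + length h) (R w' y')"
      using facts(7) \<open>i = i'\<close> unfolding R_def by simp_all
    ultimately show "x = x'" using eq \<open>i = i'\<close> unfolding x by simp
  qed
  have image: "\<Phi> ` Dom \<subseteq> T"
    using Dom h(2) unfolding \<Phi>_def T_def by fastforce
  have "(\<Sum>i\<le>n. prefix_count (inv_lang B\<^sub>1) i * prefix_count (inv_lang B\<^sub>2) (n - i)) = card Dom"
    unfolding Dom_def prefix_count_def
    by (simp add: card_SigmaI card_cartesian_product finite_prefixes_of_length)
  also have "\<dots> \<le> card T"
    using inj image unfolding T_def
    by (intro card_inj_on_le finite_SigmaI finite_cartesian_product finite_prefixes_of_length) auto
  also have "\<dots> = (\<Sum>t\<le>D. (D + length h + 2) * prefix_count (inv_lang B\<^sub>2) (n + length h + t))"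
    unfolding T_def prefix_count_def
    by (simp add: card_SigmaI card_cartesian_product finite_prefixes_of_length)
  also have "\<dots> \<le> (\<Sum>t\<le>D. (D + length h + 2) * prefix_count (inv_lang B\<^sub>2) (n + (length h + D)))"
    using monoD[OF prefix_count_mono[OF assms(3)]] by (intro sum_mono mult_left_mono) auto
  also have "\<dots> = ((D + 1) * (D + length h + 2)) * prefix_count (inv_lang B\<^sub>2) (n + (length h + D))"
    by (simp only: sum_constant card_atMost of_nat_id Suc_eq_plus1 mult.assoc)
  finally show ?thesis .
qed

lemma prefix_count_sub_invariant_below_growth:
  fixes B\<^sub>1 B\<^sub>2 :: "'v::finite bexp" and \<beta> C :: real
  assumes "inv_lang B\<^sub>1 \<subseteq> inv_lang B\<^sub>2" "strongly_connected (inv_lang B\<^sub>2)"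
    and "w \<in> inv_lang B\<^sub>2" "w \<notin> inv_lang B\<^sub>1" and "0 < \<beta>"
    and "\<And>n. \<beta> ^ n \<le> prefix_count (inv_lang B\<^sub>2) n"
    and "\<And>n. prefix_count (inv_lang B\<^sub>2) n \<le> C * \<beta> ^ n"
  shows "\<exists>m. prefix_count (inv_lang B\<^sub>1) m < \<beta> ^ m"
proof -
  obtain D ext where "\<And>u. u \<in> prefixes_of (inv_lang B\<^sub>2) \<Longrightarrow>
      length (ext u) \<le> D \<and> reset_word (inv_lang B\<^sub>2) (u @ ext u)"
    using strongly_connected_inv_lang_bounded_reset[OF assms(2)] by blast
  moreover obtain h j where "reset_word (inv_lang B\<^sub>2) h" "Suc j < length h"
    "\<not> inv_step B\<^sub>1 (h ! j) (h ! Suc j)"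
    using reset_word_with_forbidden_step[OF assms(2-4)] .
  ultimately show ?thesis
    using prefix_count_convolution_le[OF assms(1)] assms(3)
    by (intro convolution_bound_gives_slower_term[OF assms(5-7)]) blast
qed

theorem theorem2:
  fixes B1 B2 :: "'v::finite bexp"
  assumes "inv_lang B1 \<noteq> {}"
    and "inv_lang B2 \<noteq> {}"
    and "\<forall>w. sat_inv w B1 \<longrightarrow> sat_inv w B2"
    and "\<not> (\<forall>w. sat_inv w B2 \<longrightarrow> sat_inv w B1)"
    and "strongly_connected (inv_lang B2)"
  shows "hausdorff_dim (inv_lang B1) < hausdorff_dim (inv_lang B2)"
proof -
  let ?r = "real CARD('v set)"
  have sub: "inv_lang B1 \<subseteq> inv_lang B2" using assms(3) unfolding inv_lang_def by blast
  obtain w where w: "w \<in> inv_lang B2" "w \<notin> inv_lang B1" using assms(4) unfolding inv_lang_def by blast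
  obtain \<beta> C :: real where "0 < \<beta>" "0 < C"
    and growth: "\<And>n. \<beta> ^ n \<le> prefix_count (inv_lang B2) n"
      "\<And>n. prefix_count (inv_lang B2) n \<le> C * \<beta> ^ n"
    using strongly_connected_inv_lang_growth[OF assms(5,2)] by blast
  obtain m where "prefix_count (inv_lang B1) m < \<beta> ^ m"
    using prefix_count_sub_invariant_below_growth[OF sub assms(5) w \<open>0 < \<beta>\<close> growth] by blast
  then obtain \<gamma> M :: real where "0 < \<gamma>" "\<gamma> < \<beta>" and "\<And>n. prefix_count (inv_lang B1) n \<le> M * \<gamma> ^ n"
    using submult_growth_below[OF prefix_count_pos[OF assms(1)] prefix_count_zero_le
        prefix_count_inv_lang_submult \<open>0 < \<beta>\<close>] by blast
  then have "hausdorff_dim (inv_lang B1) \<le> log ?r \<gamma>"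
    by (intro hausdorff_dim_le_of_prefix_count[OF assms(1)])
  also have "\<dots> < log ?r \<beta>"
    using \<open>0 < \<gamma>\<close> \<open>\<gamma> < \<beta>\<close> card_alphabet_ge_2[where 'v = 'v] by simp
  also have "\<dots> = hausdorff_dim (inv_lang B2)"
    using hausdorff_dim_eq_of_prefix_count[OF assms(2) \<open>0 < \<beta>\<close> \<open>0 < C\<close> growth] by simp
  finally show ?thesis .
qed

end
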